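(* If $K\subseteq\mathbb{R}^d$ is a compact set with infinitely many connected components, then $(C^1(K),\|\cdot\|_{C^1(K)})$ is not complete.
   Context: $C^1(K)$ is the set of $f:K\to\mathbb{R}$ admitting a continuous derivative on $K$, i.e. a continuous $df:K\to\mathbb{R}^d$ with $\lim_{y\to x,\,y\in K\setminus\{x\}}\frac{f(y)-f(x)-\langle df(x),y-x\rangle}{|y-x|}=0$ for all $x\in K$. Its norm is $\|f\|_{C^1(K)}=\|f\|_K+\inf\{\|df\|_K: df \text{ a continuous derivative of } f \text{ on } K\}$, where $\|\cdot\|_K$ is the sup norm on $K$. *)

theory Defs
  imports "HOL-Analysis.Analysis"
begin

(* df is a continuous derivative of f on K (Whitney-style, relative to K).
   Note: "at x within K" already excludes the point x itself. *)
definition is_C1_deriv_on :: "'a::euclidean_space set \<Rightarrow> ('a \<Rightarrow> real) \<Rightarrow> ('a \<Rightarrow> 'a) \<Rightarrow> bool" where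
  "is_C1_deriv_on K f df \<longleftrightarrow>
     continuous_on K df \<and>
     (\<forall>x\<in>K. ((\<lambda>y. (f y - f x - inner (df x) (y - x)) / norm (y - x)) \<longlongrightarrow> 0) (at x within K))"

definition C1 :: "'a::euclidean_space set \<Rightarrow> ('a \<Rightarrow> real) set" where
  "C1 K = {f. \<exists>df. is_C1_deriv_on K f df}"

definition sup_norm_on :: "'a set \<Rightarrow> ('a \<Rightarrow> 'b::real_normed_vector) \<Rightarrow> real" where
  "sup_norm_on K g = (SUP x\<in>K. norm (g x))"

definition C1_norm :: "'a::euclidean_space set \<Rightarrow> ('a \<Rightarrow> real) \<Rightarrow> real" where
  "C1_norm K f = sup_norm_on K f + Inf {sup_norm_on K df | df. is_C1_deriv_on K f df}"

definition C1_complete :: "'a::euclidean_space set \<Rightarrow> bool" where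
  "C1_complete K \<longleftrightarrow>
     (\<forall>f :: nat \<Rightarrow> 'a \<Rightarrow> real.
        (\<forall>n. f n \<in> C1 K) \<and>
        (\<forall>e>0. \<exists>N. \<forall>m\<ge>N. \<forall>n\<ge>N. C1_norm K (\<lambda>x. f m x - f n x) < e)
        \<longrightarrow> (\<exists>g\<in>C1 K. (\<lambda>n. C1_norm K (\<lambda>x. f n x - g x)) \<longlonglongrightarrow> 0))"

end

theory Submission
  imports Defs
begin

text \<open>In a compact set, components coincide with quasi-components, so points in different
components are separated by relatively clopen sets. With infinitely many components one finds
\<open>l \<in> K\<close> and points \<open>y\<^sub>j\<close> with \<open>|y\<^sub>j - l| < 4\<^sup>-\<^sup>j\<close>, each lying in a clopen set \<open>W\<^sub>j\<close> that misses \<open>l\<close>.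
The partial sums of \<open>\<Sum>\<^sub>j 2\<^sup>-\<^sup>j 1\<^bsub>W\<^sub>j\<^esub>\<close> are locally constant, so \<open>0\<close> is a derivative of them and
their \<open>C\<^sup>1\<close> norm is their sup norm: they form a Cauchy sequence. A \<open>C\<^sup>1\<close> limit \<open>g\<close> would have
\<open>g l = 0\<close> and \<open>g y\<^sub>j \<ge> 2\<^sup>-\<^sup>j\<close>, hence difference quotients at least \<open>2\<^sup>j\<close> along \<open>y\<^sub>j \<rightarrow> l\<close>,
which no derivative at \<open>l\<close> allows.\<close>

lemma compact_separate_components_by_clopen:
  fixes K :: "'a::euclidean_space set"
  assumes "compact K" "x \<in> K" "y \<in> K" "\<not> connected_component K x y"
  obtains W where "openin (top_of_set K) W" "closedin (top_of_set K) W" "x \<in> W" "y \<notin> W"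
proof -
  have "quasi_component_of (top_of_set K) x = connected_component_of (top_of_set K) x"
    using assms(1)
    by (intro quasi_eq_connected_component_of)
       (simp add: compact_space_subtopology Hausdorff_space_subtopology)
  moreover have "\<not> connected_component_of (top_of_set K) x y"
    using assms(4) unfolding connected_component_of_def connected_component_def
    by (auto simp: connectedin_subtopology)
  ultimately have "\<not> quasi_component_of (top_of_set K) x y"
    by simp
  then obtain W where W: "closedin (top_of_set K) W" "openin (top_of_set K) W"
    "\<not> (x \<in> W \<longleftrightarrow> y \<in> W)"
    using assms(2,3) unfolding quasi_component_of_def by auto
  show thesis
  proof (cases "x \<in> W")
    case True
    then show thesis using W that by blast
  next
    case False
    have "openin (top_of_set K) (K - W)" "closedin (top_of_set K) (K - W)"
      using W(1,2) by (auto intro: openin_diff closedin_diff)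
    then show thesis using False W(3) assms(2) that[of "K - W"] by blast
  qed
qed

lemma compact_infinite_components_sequence:
  fixes K :: "'a::euclidean_space set"
  assumes "compact K" "infinite (components K)"
  obtains l z where "l \<in> K" "z \<longlonglongrightarrow> l" "\<And>n. z n \<in> K" "\<And>n. \<not> connected_component K (z n) l"
proof -
  obtain c :: "nat \<Rightarrow> 'a set" where c: "inj c" "range c \<subseteq> components K"
    using infinite_countable_subset assms(2) by blast
  have "\<exists>x. x \<in> c n" for n
    using c(2) in_components_nonempty by blast
  then obtain x where x: "\<And>n. x n \<in> c n"
    by metis
  have xK: "x n \<in> K" for n
    using x c(2) in_components_subset by blast
  have c_eq: "c n = connected_component_set K (x n)" for n
    using c(2) x by (metis componentsE connected_component_eq rangeI subsetD)
  have x_inj: "m = n" if "connected_component K (x m) (x n)" for m n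
    using that c_eq c(1) connected_component_eq by (metis injD mem_Collect_eq)
  obtain l r where l: "l \<in> K" and r: "strict_mono r" and lim: "(x \<circ> r) \<longlonglongrightarrow> l"
    using compact_imp_seq_compact[OF assms(1)] xK unfolding seq_compact_def by metis
  have "\<forall>\<^sub>F n in sequentially. \<not> connected_component K (x (r n)) l"
  proof (cases "\<exists>n\<^sub>0. connected_component K (x (r n\<^sub>0)) l")
    case True
    then obtain n\<^sub>0 where n\<^sub>0: "connected_component K (x (r n\<^sub>0)) l"
      by blast
    have "\<not> connected_component K (x (r n)) l" if "n > n\<^sub>0" for n
    proof
      assume "connected_component K (x (r n)) l"
      then have "connected_component K (x (r n)) (x (r n\<^sub>0))"
        using n\<^sub>0 connected_component_sym connected_component_trans by metis
      then show False
        using x_inj strict_monoD[OF r that] by fastforce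
    qed
    then show ?thesis
      by (rule eventually_mono[OF eventually_gt_at_top])
  qed simp
  then obtain N where N: "\<And>n. n \<ge> N \<Longrightarrow> \<not> connected_component K (x (r n)) l"
    unfolding eventually_sequentially by blast
  have "(\<lambda>n. x (r (n + N))) \<longlonglongrightarrow> l"
    using LIMSEQ_ignore_initial_segment[OF lim, of N] by (simp add: o_def)
  then show thesis
    using that[of l "\<lambda>n. x (r (n + N))"] l xK N by auto
qed

lemma compact_infinite_components_clopen_approach:
  fixes K :: "'a::euclidean_space set"
  assumes "compact K" "infinite (components K)" "\<And>j. e j > 0"
  obtains l y W where "l \<in> K"
    "\<And>j. openin (top_of_set K) (W j)" "\<And>j. closedin (top_of_set K) (W j)"
    "\<And>j. y j \<in> W j" "\<And>j. l \<notin> W j" "\<And>j. dist (y j) l < e j"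
proof -
  obtain l z where l: "l \<in> K" and lim: "z \<longlonglongrightarrow> l" and zK: "\<And>n. z n \<in> K"
    and sep: "\<And>n. \<not> connected_component K (z n) l"
    using compact_infinite_components_sequence[OF assms(1,2)] by blast
  have "\<exists>n. dist (z n) l < e j" for j
    using lim assms(3) unfolding lim_sequentially by blast
  then obtain n where n: "\<And>j. dist (z (n j)) l < e j"
    by metis
  have "\<exists>W. openin (top_of_set K) W \<and> closedin (top_of_set K) W \<and> z (n j) \<in> W \<and> l \<notin> W" for j
    using compact_separate_components_by_clopen[OF assms(1) zK l sep] by metis
  then obtain W where "\<And>j. openin (top_of_set K) (W j) \<and> closedin (top_of_set K) (W j)
      \<and> z (n j) \<in> W j \<and> l \<notin> W j"
    by metis
  then show thesis
    using that[of l W "\<lambda>j. z (n j)"] l n by blast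
qed

definition locally_constant_on :: "'a::topological_space set \<Rightarrow> ('a \<Rightarrow> 'b) \<Rightarrow> bool" where
  "locally_constant_on K f \<longleftrightarrow> (\<forall>x\<in>K. \<forall>\<^sub>F y in at x within K. f y = f x)"

lemma locally_constant_on_indicator:
  assumes "openin (top_of_set K) W" "closedin (top_of_set K) W"
  shows "locally_constant_on K (indicator W)"
  unfolding locally_constant_on_def
proof
  have near: "\<forall>\<^sub>F y in at x within K. y \<in> V" if V: "openin (top_of_set K) V" "x \<in> V" for x V
  proof -
    obtain T where T: "open T" "V = K \<inter> T"
      using V(1) openin_open by blast
    have "x \<in> T"
      using V(2) T(2) by blast
    then have "\<forall>\<^sub>F y in at x within K. y \<in> T"
      using topological_tendstoD[OF tendsto_ident_at T(1)] by blast
    moreover have "\<forall>\<^sub>F y in at x within K. y \<in> K"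
      by (simp add: eventually_at_filter)
    ultimately show ?thesis
      by eventually_elim (simp add: T(2))
  qed
  fix x assume "x \<in> K"
  show "\<forall>\<^sub>F y in at x within K. indicator W y = indicator W x"
  proof (cases "x \<in> W")
    case True
    then have "\<forall>\<^sub>F y in at x within K. y \<in> W"
      using near[OF assms(1)] by blast
    then show ?thesis
      by eventually_elim (simp add: True)
  next
    case False
    have "openin (top_of_set K) (K - W)"
      using assms(2) by (simp add: closedin_def)
    then have "\<forall>\<^sub>F y in at x within K. y \<in> K - W"
      using near False \<open>x \<in> K\<close> by blast
    then show ?thesis
      by eventually_elim (simp add: False)
  qed
qed

lemma locally_constant_on_compose:
  assumes "locally_constant_on K f"
  shows "locally_constant_on K (\<lambda>x. h (f x))"
  unfolding locally_constant_on_def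
proof
  fix x assume "x \<in> K"
  then have "\<forall>\<^sub>F y in at x within K. f y = f x"
    using assms unfolding locally_constant_on_def by blast
  then show "\<forall>\<^sub>F y in at x within K. h (f y) = h (f x)"
    by eventually_elim simp
qed

lemma locally_constant_on_diff:
  assumes "locally_constant_on K f" "locally_constant_on K g"
  shows "locally_constant_on K (\<lambda>x. f x - g x)"
  unfolding locally_constant_on_def
proof
  fix x assume "x \<in> K"
  then have "\<forall>\<^sub>F y in at x within K. f y = f x" "\<forall>\<^sub>F y in at x within K. g y = g x"
    using assms unfolding locally_constant_on_def by blast+
  then show "\<forall>\<^sub>F y in at x within K. f y - g y = f x - g x"
    by eventually_elim simp
qed

lemma locally_constant_on_sum:
  assumes "finite A" "\<And>i. i \<in> A \<Longrightarrow> locally_constant_on K (f i)"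
  shows "locally_constant_on K (\<lambda>x. \<Sum>i\<in>A. f i x)"
  unfolding locally_constant_on_def
proof
  fix x assume "x \<in> K"
  then have "\<forall>\<^sub>F y in at x within K. \<forall>i\<in>A. f i y = f i x"
    using assms unfolding locally_constant_on_def by (intro eventually_ball_finite) auto
  then show "\<forall>\<^sub>F y in at x within K. (\<Sum>i\<in>A. f i y) = (\<Sum>i\<in>A. f i x)"
    by eventually_elim simp
qed

lemma locally_constant_on_imp_C1_deriv_zero:
  assumes "locally_constant_on K f"
  shows "is_C1_deriv_on K f (\<lambda>_. 0)"
  unfolding is_C1_deriv_on_def
proof (intro conjI ballI)
  fix x assume "x \<in> K"
  then have "\<forall>\<^sub>F y in at x within K. f y = f x"
    using assms unfolding locally_constant_on_def by blast
  then have "\<forall>\<^sub>F y in at x within K. 0 = (f y - f x - inner 0 (y - x)) / norm (y - x)"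
    by eventually_elim simp
  then show "((\<lambda>y. (f y - f x - inner 0 (y - x)) / norm (y - x)) \<longlongrightarrow> 0) (at x within K)"
    by (rule Lim_transform_eventually[OF tendsto_const])
qed simp

lemma is_C1_deriv_on_imp_continuous_on:
  assumes "is_C1_deriv_on K f df"
  shows "continuous_on K f"
  unfolding continuous_on_def
proof
  fix x assume "x \<in> K"
  define R where "R y = (f y - f x - inner (df x) (y - x)) / norm (y - x)" for y
  have "(R \<longlongrightarrow> 0) (at x within K)"
    using assms \<open>x \<in> K\<close> unfolding is_C1_deriv_on_def R_def by blast
  moreover have "((\<lambda>y. y - x) \<longlongrightarrow> x - x) (at x within K)"
    by (intro tendsto_diff tendsto_ident_at tendsto_const)
  ultimately have "((\<lambda>y. R y * norm (y - x) + inner (df x) (y - x) + f x)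
      \<longlongrightarrow> 0 * norm (x - x) + inner (df x) (x - x) + f x) (at x within K)"
    by (intro tendsto_add tendsto_mult tendsto_norm tendsto_inner tendsto_const)
  then have "((\<lambda>y. R y * norm (y - x) + inner (df x) (y - x) + f x) \<longlongrightarrow> f x) (at x within K)"
    by simp
  moreover have "\<forall>\<^sub>F y in at x within K. R y * norm (y - x) + inner (df x) (y - x) + f x = f y"
    unfolding eventually_at_filter R_def by (auto intro!: always_eventually)
  ultimately show "(f \<longlongrightarrow> f x) (at x within K)"
    by (rule Lim_transform_eventually)
qed

lemma is_C1_deriv_on_diff:
  assumes "is_C1_deriv_on K f df" "is_C1_deriv_on K g dg"
  shows "is_C1_deriv_on K (\<lambda>x. f x - g x) (\<lambda>x. df x - dg x)"
  unfolding is_C1_deriv_on_def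
proof (intro conjI ballI)
  show "continuous_on K (\<lambda>x. df x - dg x)"
    using assms unfolding is_C1_deriv_on_def by (intro continuous_on_diff) auto
  fix x assume "x \<in> K"
  then have "((\<lambda>y. (f y - f x - inner (df x) (y - x)) / norm (y - x)
      - (g y - g x - inner (dg x) (y - x)) / norm (y - x)) \<longlongrightarrow> 0 - 0) (at x within K)"
    using assms unfolding is_C1_deriv_on_def by (intro tendsto_diff) auto
  then show "((\<lambda>y. (f y - g y - (f x - g x) - inner (df x - dg x) (y - x)) / norm (y - x))
      \<longlongrightarrow> 0) (at x within K)"
    by (simp add: inner_diff_left diff_divide_distrib[symmetric] algebra_simps)
qed

lemma norm_le_sup_norm_on:
  fixes g :: "'a::euclidean_space \<Rightarrow> 'b::real_normed_vector"
  assumes "compact K" "continuous_on K g" "x \<in> K"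
  shows "norm (g x) \<le> sup_norm_on K g"
proof -
  have "bounded (g ` K)"
    using assms(1,2) by (intro compact_imp_bounded compact_continuous_image)
  then obtain B where "\<forall>x\<in>K. norm (g x) \<le> B"
    by (auto simp: bounded_iff)
  then have "bdd_above ((\<lambda>x. norm (g x)) ` K)"
    by (auto intro!: bdd_aboveI)
  then show ?thesis
    unfolding sup_norm_on_def using assms(3) by (rule cSUP_upper[rotated])
qed

lemma C1_deriv_sup_norm_nonneg:
  assumes "compact K" "K \<noteq> {}" "is_C1_deriv_on K f df"
  shows "0 \<le> sup_norm_on K df"
proof -
  obtain x where x: "x \<in> K"
    using assms(2) by blast
  have "continuous_on K df"
    using assms(3) unfolding is_C1_deriv_on_def by blast
  then have "norm (df x) \<le> sup_norm_on K df"
    using norm_le_sup_norm_on[OF assms(1) _ x] by blast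
  then show ?thesis
    using norm_ge_zero[of "df x"] by linarith
qed

lemma abs_le_C1_norm:
  assumes "compact K" "is_C1_deriv_on K h dh" "x \<in> K"
  shows "\<bar>h x\<bar> \<le> C1_norm K h"
proof -
  have "\<bar>h x\<bar> \<le> sup_norm_on K h"
    using norm_le_sup_norm_on[OF assms(1) is_C1_deriv_on_imp_continuous_on[OF assms(2)] assms(3)]
    by simp
  moreover have "0 \<le> Inf {sup_norm_on K df | df. is_C1_deriv_on K h df}"
    using assms C1_deriv_sup_norm_nonneg[OF assms(1)] by (intro cInf_greatest) auto
  ultimately show ?thesis
    unfolding C1_norm_def by linarith
qed

lemma C1_norm_le_if_locally_constant:
  assumes "compact K" "K \<noteq> {}" "locally_constant_on K f" "\<And>x. x \<in> K \<Longrightarrow> \<bar>f x\<bar> \<le> B"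
  shows "C1_norm K f \<le> B"
proof -
  let ?D = "{sup_norm_on K df | df. is_C1_deriv_on K f df}"
  have "sup_norm_on K f \<le> B"
    unfolding sup_norm_on_def using assms(2,4) by (auto intro!: cSUP_least)
  moreover have "sup_norm_on K (\<lambda>_. 0::'a) \<in> ?D"
    using locally_constant_on_imp_C1_deriv_zero[OF assms(3)] by blast
  moreover have "bdd_below ?D"
    using C1_deriv_sup_norm_nonneg[OF assms(1,2)] by (auto intro!: bdd_belowI[of _ 0])
  ultimately have "Inf ?D \<le> 0" "sup_norm_on K f \<le> B"
    using cInf_lower[of "sup_norm_on K (\<lambda>_. 0::'a)" ?D] assms(2)
    by (auto simp: sup_norm_on_def)
  then show ?thesis
    unfolding C1_norm_def by linarith
qed

lemma C1_norm_tendsto_zero_imp_tendsto: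
  assumes "compact K" "\<And>n. f n \<in> C1 K" "g \<in> C1 K"
    and "(\<lambda>n. C1_norm K (\<lambda>x. f n x - g x)) \<longlonglongrightarrow> 0" "x \<in> K"
  shows "(\<lambda>n. f n x) \<longlonglongrightarrow> g x"
proof -
  obtain dg where dg: "is_C1_deriv_on K g dg"
    using assms(3) unfolding C1_def by blast
  have "\<exists>df. is_C1_deriv_on K (f n) df" for n
    using assms(2) unfolding C1_def by blast
  then obtain df where df: "\<And>n. is_C1_deriv_on K (f n) (df n)"
    by metis
  have "\<bar>f n x - g x\<bar> \<le> C1_norm K (\<lambda>x. f n x - g x)" for n
    using abs_le_C1_norm[OF assms(1) is_C1_deriv_on_diff[OF df dg] assms(5)] .
  then have "(\<lambda>n. f n x - g x) \<longlonglongrightarrow> 0"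
    by (intro Lim_null_comparison[OF _ assms(4)]) auto
  then show ?thesis
    by (simp add: LIM_zero_iff)
qed

lemma C1_deriv_difference_quotient_eventually_le:
  assumes "is_C1_deriv_on K g dg" "l \<in> K" "y \<longlonglongrightarrow> l" "\<And>j. y j \<in> K" "\<And>j. y j \<noteq> l"
  shows "\<forall>\<^sub>F j in sequentially. (g (y j) - g l) / norm (y j - l) \<le> norm (dg l) + 1"
proof -
  define R where "R w = (g w - g l - inner (dg l) (w - l)) / norm (w - l)" for w
  have "(R \<longlongrightarrow> 0) (at l within K)"
    using assms(1,2) unfolding is_C1_deriv_on_def R_def by blast
  moreover have "filterlim y (at l within K) sequentially"
    using assms(3-5) by (auto simp: filterlim_at intro: always_eventually)
  ultimately have "(\<lambda>j. R (y j)) \<longlonglongrightarrow> 0"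
    by (rule filterlim_compose)
  then have "\<forall>\<^sub>F j in sequentially. R (y j) < 1"
    by (rule order_tendstoD) simp
  then show ?thesis
  proof eventually_elim
    case (elim j)
    have "inner (dg l) (y j - l) \<le> norm (dg l) * norm (y j - l)"
      by (rule norm_cauchy_schwarz)
    then have "inner (dg l) (y j - l) / norm (y j - l) \<le> norm (dg l)"
      using assms(5) by (simp add: divide_le_eq)
    moreover have "(g (y j) - g l) / norm (y j - l) = R (y j) + inner (dg l) (y j - l) / norm (y j - l)"
      unfolding R_def by (simp add: diff_divide_distrib)
    ultimately show ?case
      using elim by linarith
  qed
qed

definition indicator_series :: "(nat \<Rightarrow> 'a set) \<Rightarrow> nat \<Rightarrow> 'a \<Rightarrow> real" where
  "indicator_series W n x = (\<Sum>j<n. (1/2)^j * indicator (W j) x)"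

lemma locally_constant_on_indicator_series:
  assumes "\<And>j. locally_constant_on K (indicator (W j) :: 'a::topological_space \<Rightarrow> real)"
  shows "locally_constant_on K (indicator_series W n)"
proof -
  have "locally_constant_on K (\<lambda>x. (1/2::real)^j * indicator (W j) x)" for j
    using locally_constant_on_compose[OF assms[of j], of "\<lambda>t. (1/2)^j * t"] by simp
  then show ?thesis
    unfolding indicator_series_def by (intro locally_constant_on_sum) auto
qed

lemma indicator_series_diff_bound:
  assumes "q \<le> p"
  shows "\<bar>indicator_series W p x - indicator_series W q x\<bar> \<le> (\<Sum>j\<in>{q..<p}. (1/2)^j)"
proof -
  have "indicator_series W p x - indicator_series W q x
      = (\<Sum>j\<in>{q..<p}. (1/2::real)^j * indicator (W j) x)"
    unfolding indicator_series_def
    using sum.atLeastLessThan_concat[of 0 q p "\<lambda>j. (1/2::real)^j * indicator (W j) x"] assms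
    by (simp add: atLeast0LessThan)
  moreover have "0 \<le> (\<Sum>j\<in>{q..<p}. (1/2::real)^j * indicator (W j) x)"
    by (intro sum_nonneg) simp
  moreover have "(\<Sum>j\<in>{q..<p}. (1/2::real)^j * indicator (W j) x) \<le> (\<Sum>j\<in>{q..<p}. (1/2)^j)"
    by (intro sum_mono) (simp add: indicator_def)
  ultimately show ?thesis
    by simp
qed

lemma indicator_series_C1_Cauchy:
  assumes "compact K" "K \<noteq> {}"
    and "\<And>j. locally_constant_on K (indicator (W j) :: 'a::euclidean_space \<Rightarrow> real)"
  shows "\<forall>e>0. \<exists>N. \<forall>m\<ge>N. \<forall>n\<ge>N.
    C1_norm K (\<lambda>x. indicator_series W m x - indicator_series W n x) < e"
proof (intro allI impI)
  have lc: "locally_constant_on K (indicator_series W k)" for k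
    by (rule locally_constant_on_indicator_series[OF assms(3)])
  fix e :: real assume "e > 0"
  then obtain N where N: "\<And>m n. m \<ge> N \<Longrightarrow> norm (\<Sum>j\<in>{m..<n}. (1/2::real)^j) < e"
    using summable_Cauchy[THEN iffD1, OF summable_geometric[of "1/2::real"]] by fastforce
  have "C1_norm K (\<lambda>x. indicator_series W m x - indicator_series W n x) < e"
    if "m \<ge> N" "n \<ge> N" for m n
  proof -
    have "\<bar>indicator_series W m x - indicator_series W n x\<bar> \<le> (\<Sum>j\<in>{min m n..<max m n}. (1/2)^j)"
      for x
      using indicator_series_diff_bound[of n m W x] indicator_series_diff_bound[of m n W x]
      by (cases "n \<le> m") (auto simp: abs_minus_commute)
    then have "C1_norm K (\<lambda>x. indicator_series W m x - indicator_series W n x)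
        \<le> (\<Sum>j\<in>{min m n..<max m n}. (1/2)^j)"
      using assms(1,2) lc by (intro C1_norm_le_if_locally_constant locally_constant_on_diff) auto
    also have "\<dots> < e"
      using N[of "min m n" "max m n"] that by simp
    finally show ?thesis .
  qed
  then show "\<exists>N. \<forall>m\<ge>N. \<forall>n\<ge>N.
      C1_norm K (\<lambda>x. indicator_series W m x - indicator_series W n x) < e"
    by blast
qed

lemma two_power_le_quotient:
  fixes a d :: real
  assumes "(1/2)^j \<le> a" "0 < d" "d < (1/4)^j"
  shows "2^j \<le> a / d"
proof -
  have "(1/4::real)^j = (1/2)^j * (1/2)^j"
    by (simp flip: power_mult_distrib)
  then have "(2::real)^j = (1/2)^j / (1/4)^j"
    by (simp add: power_one_over)
  also have "\<dots> \<le> a / (1/4)^j"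
    using assms(1) by (intro divide_right_mono) auto
  also have "\<dots> \<le> a / d"
  proof (rule divide_left_mono)
    show "0 \<le> a"
      using assms(1) zero_le_power[of "1/2::real" j] by linarith
  qed (use assms in auto)
  finally show ?thesis .
qed

lemma not_C1_complete_if_clopen_approach:
  fixes K :: "'a::euclidean_space set"
  assumes "compact K" "l \<in> K"
    and W: "\<And>j. openin (top_of_set K) (W j)" "\<And>j. closedin (top_of_set K) (W j)"
    and y: "\<And>j. y j \<in> W j" "\<And>j. l \<notin> W j" "\<And>j. dist (y j) l < (1/4)^j"
  shows "\<not> C1_complete K"
proof
  assume "C1_complete K"
  let ?f = "indicator_series W"
  have lc: "locally_constant_on K (indicator (W j) :: 'a \<Rightarrow> real)" for j
    using W by (rule locally_constant_on_indicator)
  have f_C1: "?f n \<in> C1 K" for n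
    unfolding C1_def
    using locally_constant_on_imp_C1_deriv_zero[OF locally_constant_on_indicator_series[where W = W, OF lc]]
    by blast
  have "K \<noteq> {}"
    using assms(2) by blast
  then have "\<forall>e>0. \<exists>N. \<forall>m\<ge>N. \<forall>n\<ge>N. C1_norm K (\<lambda>x. ?f m x - ?f n x) < e"
    by (rule indicator_series_C1_Cauchy[OF assms(1) _ lc])
  then obtain g where g: "g \<in> C1 K" "(\<lambda>n. C1_norm K (\<lambda>x. ?f n x - g x)) \<longlonglongrightarrow> 0"
    using \<open>C1_complete K\<close>[unfolded C1_complete_def, THEN spec[where x = ?f]] f_C1 by blast
  obtain dg where dg: "is_C1_deriv_on K g dg"
    using g(1) unfolding C1_def by blast
  have yK: "y j \<in> K" and y_ne: "y j \<noteq> l" for j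
    using W(1)[of j] y(1,2)[of j] openin_imp_subset by blast+
  have f_g: "(\<lambda>n. ?f n x) \<longlonglongrightarrow> g x" if "x \<in> K" for x
    using C1_norm_tendsto_zero_imp_tendsto[OF assms(1) f_C1 g that] .
  have g_l: "g l = 0"
    using LIMSEQ_unique[OF f_g[OF assms(2)]] y(2) by (simp add: indicator_series_def)
  have g_y: "(1/2)^j \<le> g (y j)" for j
  proof (rule LIMSEQ_le_const[OF f_g[OF yK]])
    have "(1/2)^j \<le> ?f n (y j)" if "n > j" for n
      using member_le_sum[of j "{..<n}" "\<lambda>i. (1/2::real)^i * indicator (W i) (y j)"] y(1) that
      by (simp add: indicator_series_def)
    then show "\<exists>N. \<forall>n\<ge>N. (1/2)^j \<le> ?f n (y j)"
      by (intro exI[of _ "Suc j"]) auto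
  qed
  have quotient: "2^j \<le> (g (y j) - g l) / norm (y j - l)" for j
    using g_y[of j] y_ne[of j] y(3)[of j] unfolding g_l dist_norm
    by (intro two_power_le_quotient) auto
  have "(\<lambda>j. dist (y j) l) \<longlonglongrightarrow> 0"
  proof (rule Lim_null_comparison[OF _ LIMSEQ_power_zero[of "1/4::real"]])
    show "\<forall>\<^sub>F j in sequentially. norm (dist (y j) l) \<le> (1/4)^j"
      using y(3) by (intro always_eventually allI) (simp add: less_imp_le)
  qed simp
  then have "y \<longlonglongrightarrow> l"
    by (rule tendsto_dist_iff[THEN iffD2])
  then have "\<forall>\<^sub>F j in sequentially. (g (y j) - g l) / norm (y j - l) \<le> norm (dg l) + 1"
    by (rule C1_deriv_difference_quotient_eventually_le[OF dg assms(2) _ yK y_ne])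
  moreover have "\<forall>\<^sub>F j in sequentially. norm (dg l) + 1 < (2::real)^j"
    using filterlim_at_infinity_imp_norm_at_top[OF filterlim_realpow_sequentially_gt1[of "2::real"]]
    by (simp add: filterlim_at_top_dense)
  ultimately have "\<forall>\<^sub>F j in sequentially. False"
  proof eventually_elim
    case (elim j)
    then show False
      using quotient[of j] by linarith
  qed
  then show False
    by simp
qed

theorem mainTheorem5:
  fixes K :: "'a::euclidean_space set"
  assumes "compact K" and "infinite (components K)"
  shows "\<not> C1_complete K"
proof -
  obtain l y W where "l \<in> K"
    "\<And>j. openin (top_of_set K) (W j)" "\<And>j. closedin (top_of_set K) (W j)"
    "\<And>j. y j \<in> W j" "\<And>j. l \<notin> W j" "\<And>j. dist (y j) l < (1/4::real)^j"
    by (rule compact_infinite_components_clopen_approach[OF assms, where e = "\<lambda>j. (1/4)^j"]) (simp, blast)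
  then show ?thesis
    using not_C1_complete_if_clopen_approach[OF assms(1)] by blast
qed

end
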